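(* Let $a_1,a_2>0$, $e_1,e_2\in[0,1)$, and let $K,L,M,N$ be the real numbers defined in the context. For $u_2\in\mathbb{R}$ define \[ \begin{split} \lambda &= a_1e_1^2,\\ \mu &= a_2\sqrt{1-e_1^2}\Bigl(\sqrt{1-e_2^2}\,N\sin u_2 + L\cos u_2 - e_2 L\Bigr),\\ \nu &= a_2e_2K - a_1e_1 - a_2\sqrt{1-e_2^2}\,M\sin u_2 - a_2K\cos u_2,\\ \alpha &= a_1\Bigl(\sqrt{1-e_2^2}\,M\cos u_2 - K\sin u_2\Bigr),\\ \beta &= a_1\sqrt{1-e_1^2}\Bigl(\sqrt{1-e_2^2}\,N\cos u_2 - L\sin u_2\Bigr),\\ \gamma &= a_2e_2^2\sin u_2\cos u_2 - a_1e_1\sqrt{1-e_2^2}\,M\cos u_2 + (a_1e_1K - a_2e_2)\sin u_2, \end{split} \] and let \[ \mathscr{S}(u_2) = \begin{pmatrix} \alpha^2+\beta^2 & 0 & -\alpha\lambda & 0\\ 2\alpha\gamma & \alpha^2+\beta^2 & \beta\mu - \lambda\gamma-\alpha\nu & -\alpha\lambda\\ \gamma^2-\beta^2 & 2\alpha\gamma & -\gamma\nu & \beta\mu-\lambda\gamma-\alpha\nu\\ 0 &\gamma^2-\beta^2 & 0 &-\gamma\nu \end{pmatrix} \] (the Sylvester matrix, with respect to $\cos u_1$, of the two polynomials $(\alpha^2+\beta^2)\cos^2 u_1 + 2\alpha\gamma\cos u_1 + \gamma^2-\beta^2$ and $- \alpha\lambda\cos^2 u_1 + (\beta\mu - \lambda\gamma-\alpha\nu)\cos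 u_1 -\gamma\nu$). Then $\det\mathscr{S}(u_2)$ contains the factor $\beta^2$: there is a polynomial $P$ in $\alpha,\beta,\gamma,\lambda,\mu,\nu$ (hence a trigonometric polynomial $g(u_2)$ in $\cos u_2,\sin u_2$) such that $\det\mathscr{S}(u_2)=\beta(u_2)^2\, g(u_2)$ for all $u_2$.
   Context: Two confocal elliptic orbits $\mathcal{E}_1,\mathcal{E}_2$ are given by Keplerian elements $a_i$ (semimajor axis), $e_i$ (eccentricity), $i_i$ (inclination), $\Omega_i$ (longitude of node), $\omega_i$ (argument of pericenter), $i=1,2$. Define the unit vectors $\mathcal{P}=(\cos\omega_1\cos\Omega_1-\cos i_1\sin\omega_1\sin\Omega_1,\ \cos\omega_1\sin\Omega_1+\cos i_1\sin\omega_1\cos\Omega_1,\ \sin\omega_1\sin i_1)$, $\mathcal{Q}=(-\sin\omega_1\cos\Omega_1-\cos i_1\cos\omega_1\sin\Omega_1,\ -\sin\omega_1\sin\Omega_1+\cos i_1\cos\omega_1\cos\Omega_1,\ \cos\omega_1\sin i_1)$, and $\mathfrak{p},\mathfrak{q}$ by the same formulas with $(i_2,\Omega_2,\omega_2)$ in place of $(i_1,\Omega_1,\omega_1)$. Set $K=\langle\mathcal{P},\mathfrak{p}\rangle$, $L=\langle\mathcal{Q},\mathfrak{p}\rangle$, $M=\langle\mathcal{P},\mathfrak{q}\rangle$, $N=\langle\mathcal{Q},\mathfrak{q}\rangle$. Here $u_1,u_2$ are the eccentric anomalies on the two orbits. *)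

theory Defs
  imports "HOL-Analysis.Analysis"
begin

definition Pvec :: "real \<Rightarrow> real \<Rightarrow> real \<Rightarrow> real \<times> real \<times> real" where
  "Pvec inc Om om = (cos om * cos Om - cos inc * sin om * sin Om,
                     cos om * sin Om + cos inc * sin om * cos Om,
                     sin om * sin inc)"

definition Qvec :: "real \<Rightarrow> real \<Rightarrow> real \<Rightarrow> real \<times> real \<times> real" where
  "Qvec inc Om om = (- sin om * cos Om - cos inc * cos om * sin Om,
                     - sin om * sin Om + cos inc * cos om * cos Om,
                     cos om * sin inc)"

definition inner3 :: "real \<times> real \<times> real \<Rightarrow> real \<times> real \<times> real \<Rightarrow> real" where
  "inner3 x y = fst x * fst y + fst (snd x) * fst (snd y) + snd (snd x) * snd (snd y)"


definition Kc :: "real \<Rightarrow> real \<Rightarrow> real \<Rightarrow> real \<Rightarrow> real \<Rightarrow> real \<Rightarrow> real" where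
  "Kc i1 O1 w1 i2 O2 w2 = inner3 (Pvec i1 O1 w1) (Pvec i2 O2 w2)"
definition Lc :: "real \<Rightarrow> real \<Rightarrow> real \<Rightarrow> real \<Rightarrow> real \<Rightarrow> real \<Rightarrow> real" where
  "Lc i1 O1 w1 i2 O2 w2 = inner3 (Qvec i1 O1 w1) (Pvec i2 O2 w2)"
definition Mc :: "real \<Rightarrow> real \<Rightarrow> real \<Rightarrow> real \<Rightarrow> real \<Rightarrow> real \<Rightarrow> real" where
  "Mc i1 O1 w1 i2 O2 w2 = inner3 (Pvec i1 O1 w1) (Qvec i2 O2 w2)"
definition Nc :: "real \<Rightarrow> real \<Rightarrow> real \<Rightarrow> real \<Rightarrow> real \<Rightarrow> real \<Rightarrow> real" where
  "Nc i1 O1 w1 i2 O2 w2 = inner3 (Qvec i1 O1 w1) (Qvec i2 O2 w2)"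

text \<open>A 4x4 real matrix given row by row (rows/columns indexed 1,2,3,4 in the type 4,
  where the fourth element is 0 = 4).\<close>
definition sel4 :: "4 \<Rightarrow> 'a \<Rightarrow> 'a \<Rightarrow> 'a \<Rightarrow> 'a \<Rightarrow> 'a" where
  "sel4 i x1 x2 x3 x4 = (if i = 1 then x1 else if i = 2 then x2 else if i = 3 then x3 else x4)"

definition mat4 :: "real \<times> real \<times> real \<times> real \<Rightarrow> real \<times> real \<times> real \<times> real \<Rightarrow>
                    real \<times> real \<times> real \<times> real \<Rightarrow> real \<times> real \<times> real \<times> real \<Rightarrow> real^4^4" where
  "mat4 r1 r2 r3 r4 = (\<chi> i j. (case sel4 i r1 r2 r3 r4 of (x1, x2, x3, x4) \<Rightarrow> sel4 j x1 x2 x3 x4))"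

definition sylS :: "real \<Rightarrow> real \<Rightarrow> real \<Rightarrow> real \<Rightarrow> real \<Rightarrow> real \<Rightarrow> real^4^4" where
  "sylS \<alpha> \<beta> \<gamma> lam \<mu> \<nu> = mat4
     (\<alpha>\<^sup>2 + \<beta>\<^sup>2, 0, - \<alpha> * lam, 0)
     (2 * \<alpha> * \<gamma>, \<alpha>\<^sup>2 + \<beta>\<^sup>2, \<beta> * \<mu> - lam * \<gamma> - \<alpha> * \<nu>, - \<alpha> * lam)
     (\<gamma>\<^sup>2 - \<beta>\<^sup>2, 2 * \<alpha> * \<gamma>, - \<gamma> * \<nu>, \<beta> * \<mu> - lam * \<gamma> - \<alpha> * \<nu>)
     (0, \<gamma>\<^sup>2 - \<beta>\<^sup>2, 0, - \<gamma> * \<nu>)"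

definition mpoly6_eval ::
  "(nat \<times> nat \<times> nat \<times> nat \<times> nat \<times> nat) set \<Rightarrow> (nat \<times> nat \<times> nat \<times> nat \<times> nat \<times> nat \<Rightarrow> real)
   \<Rightarrow> real \<Rightarrow> real \<Rightarrow> real \<Rightarrow> real \<Rightarrow> real \<Rightarrow> real \<Rightarrow> real" where
  "mpoly6_eval S c x1 x2 x3 x4 x5 x6 =
     (\<Sum>(i1, i2, i3, i4, i5, i6)\<in>S. c (i1, i2, i3, i4, i5, i6) *
        x1 ^ i1 * x2 ^ i2 * x3 ^ i3 * x4 ^ i4 * x5 ^ i5 * x6 ^ i6)"

end

(* With x = cos u1 the two quadratics are
     f = (alpha x + gamma)^2 - beta^2 (1 - x^2),  g = -(alpha x + gamma)(lam x + nu) + beta mu x,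
   so modulo beta both are divisible by alpha x + gamma, f even by its square, and their resultant
   det S vanishes to second order in beta.  Explicitly, the resultant of a x^2 + b x + c and
   d x^2 + e x + h is (a h - c d)^2 - (a e - b d)(b h - c e); substituting the coefficients gives
   beta^2 times a quadratic form in (lam, mu, nu) whose coefficients are polynomials in alpha, beta,
   gamma.  This is a polynomial identity. *)

theory Submission
  imports Defs
begin

type_synonym exponents6 = "nat \<times> nat \<times> nat \<times> nat \<times> nat \<times> nat"

definition monomial6 :: "exponents6 \<Rightarrow> real \<Rightarrow> real \<Rightarrow> real \<Rightarrow> real \<Rightarrow> real \<Rightarrow> real \<Rightarrow> real" where
  "monomial6 t x1 x2 x3 x4 x5 x6 =
     (case t of (i1, i2, i3, i4, i5, i6) \<Rightarrow> x1 ^ i1 * x2 ^ i2 * x3 ^ i3 * x4 ^ i4 * x5 ^ i5 * x6 ^ i6)"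

lemma monomial6_add:
  "monomial6 (s + t) x1 x2 x3 x4 x5 x6 =
     monomial6 s x1 x2 x3 x4 x5 x6 * monomial6 t x1 x2 x3 x4 x5 x6"
  by (cases s rule: prod_cases6, cases t rule: prod_cases6) (simp add: monomial6_def power_add)

lemma mpoly6_eval_eq_sum_monomial6:
  "mpoly6_eval S c x1 x2 x3 x4 x5 x6 = (\<Sum>t\<in>S. c t * monomial6 t x1 x2 x3 x4 x5 x6)"
  unfolding mpoly6_eval_def monomial6_def by (simp add: case_prod_unfold mult.assoc)

lemma mpoly6_eval_add:
  assumes "finite S" "finite T"
  shows "mpoly6_eval S c x1 x2 x3 x4 x5 x6 + mpoly6_eval T d x1 x2 x3 x4 x5 x6 =
    mpoly6_eval (S \<union> T) (\<lambda>t. (if t \<in> S then c t else 0) + (if t \<in> T then d t else 0))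
      x1 x2 x3 x4 x5 x6"
proof -
  have extend_by_zero:
    "(\<Sum>t\<in>S \<union> T. (if t \<in> A then f t else 0) * monomial6 t x1 x2 x3 x4 x5 x6) =
     (\<Sum>t\<in>A. f t * monomial6 t x1 x2 x3 x4 x5 x6)" if "A \<subseteq> S \<union> T" for A f
    using assms that by (intro sum.mono_neutral_cong_right) auto
  show ?thesis
    unfolding mpoly6_eval_eq_sum_monomial6 distrib_right sum.distrib
    by (simp add: extend_by_zero)
qed

lemma mpoly6_eval_mult:
  assumes "finite S" "finite T"
  shows "mpoly6_eval S c x1 x2 x3 x4 x5 x6 * mpoly6_eval T d x1 x2 x3 x4 x5 x6 =
    mpoly6_eval (case_prod (+) ` (S \<times> T))
      (\<lambda>m. \<Sum>(s, t)\<in>{(s, t) \<in> S \<times> T. s + t = m}. c s * d t) x1 x2 x3 x4 x5 x6"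
proof -
  let ?h = "\<lambda>(s, t). c s * d t * monomial6 (s + t) x1 x2 x3 x4 x5 x6"
  have "mpoly6_eval S c x1 x2 x3 x4 x5 x6 * mpoly6_eval T d x1 x2 x3 x4 x5 x6 = sum ?h (S \<times> T)"
    by (simp add: mpoly6_eval_eq_sum_monomial6 sum_product sum.cartesian_product monomial6_add
        mult_ac)
  also have "\<dots> = (\<Sum>m\<in>case_prod (+) ` (S \<times> T). sum ?h {p \<in> S \<times> T. case_prod (+) p = m})"
    using assms by (simp add: sum.group)
  also have "\<dots> = mpoly6_eval (case_prod (+) ` (S \<times> T))
      (\<lambda>m. \<Sum>(s, t)\<in>{(s, t) \<in> S \<times> T. s + t = m}. c s * d t) x1 x2 x3 x4 x5 x6"
    unfolding mpoly6_eval_eq_sum_monomial6 sum_distrib_right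
    by (intro sum.cong) (auto simp: case_prod_unfold)
  finally show ?thesis .
qed

definition is_mpoly6 :: "(real \<Rightarrow> real \<Rightarrow> real \<Rightarrow> real \<Rightarrow> real \<Rightarrow> real \<Rightarrow> real) \<Rightarrow> bool" where
  "is_mpoly6 f \<longleftrightarrow> (\<exists>S c. finite S \<and> f = mpoly6_eval S c)"

lemma is_mpoly6_const: "is_mpoly6 (\<lambda>x1 x2 x3 x4 x5 x6. a)"
  unfolding is_mpoly6_def
  by (intro exI[of _ "{(0, 0, 0, 0, 0, 0)}"] exI[of _ "\<lambda>_. a"])
    (simp add: mpoly6_eval_def fun_eq_iff)

lemma is_mpoly6_monomial6: "is_mpoly6 (monomial6 t)"
  unfolding is_mpoly6_def
  by (intro exI[of _ "{t}"] exI[of _ "\<lambda>_. 1"])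
    (simp add: mpoly6_eval_eq_sum_monomial6 fun_eq_iff)

lemma is_mpoly6_variables:
  shows "is_mpoly6 (\<lambda>x1 x2 x3 x4 x5 x6. x1)" and "is_mpoly6 (\<lambda>x1 x2 x3 x4 x5 x6. x2)"
    and "is_mpoly6 (\<lambda>x1 x2 x3 x4 x5 x6. x3)" and "is_mpoly6 (\<lambda>x1 x2 x3 x4 x5 x6. x4)"
    and "is_mpoly6 (\<lambda>x1 x2 x3 x4 x5 x6. x5)" and "is_mpoly6 (\<lambda>x1 x2 x3 x4 x5 x6. x6)"
  using is_mpoly6_monomial6[of "(1, 0, 0, 0, 0, 0)"] is_mpoly6_monomial6[of "(0, 1, 0, 0, 0, 0)"]
    is_mpoly6_monomial6[of "(0, 0, 1, 0, 0, 0)"] is_mpoly6_monomial6[of "(0, 0, 0, 1, 0, 0)"]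
    is_mpoly6_monomial6[of "(0, 0, 0, 0, 1, 0)"] is_mpoly6_monomial6[of "(0, 0, 0, 0, 0, 1)"]
  by (simp_all add: monomial6_def[abs_def])

lemma is_mpoly6_add:
  assumes "is_mpoly6 f" "is_mpoly6 g"
  shows "is_mpoly6 (\<lambda>x1 x2 x3 x4 x5 x6. f x1 x2 x3 x4 x5 x6 + g x1 x2 x3 x4 x5 x6)"
proof -
  obtain S c T d where "finite S" "f = mpoly6_eval S c" "finite T" "g = mpoly6_eval T d"
    using assms unfolding is_mpoly6_def by blast
  then show ?thesis
    unfolding is_mpoly6_def
    by (intro exI[of _ "S \<union> T"]
        exI[of _ "\<lambda>t. (if t \<in> S then c t else 0) + (if t \<in> T then d t else 0)"])
      (simp add: mpoly6_eval_add)
qed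

lemma is_mpoly6_mult:
  assumes "is_mpoly6 f" "is_mpoly6 g"
  shows "is_mpoly6 (\<lambda>x1 x2 x3 x4 x5 x6. f x1 x2 x3 x4 x5 x6 * g x1 x2 x3 x4 x5 x6)"
proof -
  obtain S c T d where "finite S" "f = mpoly6_eval S c" "finite T" "g = mpoly6_eval T d"
    using assms unfolding is_mpoly6_def by blast
  then show ?thesis
    unfolding is_mpoly6_def
    by (intro exI[of _ "case_prod (+) ` (S \<times> T)"]
        exI[of _ "\<lambda>m. \<Sum>(s, t)\<in>{(s, t) \<in> S \<times> T. s + t = m}. c s * d t"])
      (simp add: mpoly6_eval_mult)
qed

lemma is_mpoly6_diff:
  assumes "is_mpoly6 f" "is_mpoly6 g"
  shows "is_mpoly6 (\<lambda>x1 x2 x3 x4 x5 x6. f x1 x2 x3 x4 x5 x6 - g x1 x2 x3 x4 x5 x6)"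
  using is_mpoly6_add[OF assms(1) is_mpoly6_mult[OF is_mpoly6_const[of "-1"] assms(2)]] by simp

lemma is_mpoly6_power:
  assumes "is_mpoly6 f"
  shows "is_mpoly6 (\<lambda>x1 x2 x3 x4 x5 x6. f x1 x2 x3 x4 x5 x6 ^ n)"
proof (induction n)
  case 0
  show ?case using is_mpoly6_const[of 1] by simp
next
  case (Suc n)
  show ?case using is_mpoly6_mult[OF assms Suc.IH] by simp
qed

lemma det_4:
  "det (A::'a::comm_ring_1^4^4) =
    A$1$1 * A$2$2 * A$3$3 * A$4$4 + A$1$1 * A$2$3 * A$3$4 * A$4$2 +
    A$1$1 * A$2$4 * A$3$2 * A$4$3 + A$1$2 * A$2$1 * A$3$4 * A$4$3 +
    A$1$2 * A$2$3 * A$3$1 * A$4$4 + A$1$2 * A$2$4 * A$3$3 * A$4$1 +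
    A$1$3 * A$2$1 * A$3$2 * A$4$4 + A$1$3 * A$2$2 * A$3$4 * A$4$1 +
    A$1$3 * A$2$4 * A$3$1 * A$4$2 + A$1$4 * A$2$1 * A$3$3 * A$4$2 +
    A$1$4 * A$2$2 * A$3$1 * A$4$3 + A$1$4 * A$2$3 * A$3$2 * A$4$1 -
    A$1$1 * A$2$2 * A$3$4 * A$4$3 - A$1$1 * A$2$3 * A$3$2 * A$4$4 -
    A$1$1 * A$2$4 * A$3$3 * A$4$2 - A$1$2 * A$2$1 * A$3$3 * A$4$4 -
    A$1$2 * A$2$3 * A$3$4 * A$4$1 - A$1$2 * A$2$4 * A$3$1 * A$4$3 -
    A$1$3 * A$2$1 * A$3$4 * A$4$2 - A$1$3 * A$2$2 * A$3$1 * A$4$4 -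
    A$1$3 * A$2$4 * A$3$2 * A$4$1 - A$1$4 * A$2$1 * A$3$2 * A$4$3 -
    A$1$4 * A$2$2 * A$3$3 * A$4$1 - A$1$4 * A$2$3 * A$3$1 * A$4$2"
proof -
  have f1234: "finite {2::4, 3, 4}" "1 \<notin> {2::4, 3, 4}" by auto
  have f234: "finite {3::4, 4}" "2 \<notin> {3::4, 4}" by auto
  have f34: "finite {4::4}" "3 \<notin> {4::4}" by auto
  show ?thesis
    unfolding det_def UNIV_4
    unfolding sum_over_permutations_insert[OF f1234]
    unfolding sum_over_permutations_insert[OF f234]
    unfolding sum_over_permutations_insert[OF f34]
    unfolding permutes_sing
    by (simp add: sign_swap_id permutation_swap_id permutation_compose sign_compose sign_id
        swap_id_eq algebra_simps)
qed

lemma det_sylvester_quadratics: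
  "det (mat4 (a, 0, d, 0) (b, a, e, d) (c, b, h, e) (0, c, 0, h)) =
     (a * h - c * d)\<^sup>2 - (a * e - b * d) * (b * h - c * e)"
  by (simp add: det_4 mat4_def sel4_def) algebra

definition sylS_det_quotient :: "real \<Rightarrow> real \<Rightarrow> real \<Rightarrow> real \<Rightarrow> real \<Rightarrow> real \<Rightarrow> real" where
  "sylS_det_quotient \<alpha> \<beta> \<gamma> lam \<mu> \<nu> =
     (\<gamma>\<^sup>2 - \<alpha>\<^sup>2) * (\<gamma>\<^sup>2 - \<beta>\<^sup>2) * lam\<^sup>2 + (\<alpha>\<^sup>2 + \<beta>\<^sup>2) * (\<gamma>\<^sup>2 - \<beta>\<^sup>2) * \<mu>\<^sup>2
     + (\<alpha>\<^sup>2 + \<beta>\<^sup>2) * (\<gamma>\<^sup>2 - \<alpha>\<^sup>2) * \<nu>\<^sup>2 - 2 * \<beta> * \<gamma> * (\<gamma>\<^sup>2 - \<beta>\<^sup>2) * lam * \<mu>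
     - 2 * \<alpha> * \<gamma> * (\<gamma>\<^sup>2 - \<alpha>\<^sup>2) * lam * \<nu> + 2 * \<alpha> * \<beta> * (\<alpha>\<^sup>2 + \<beta>\<^sup>2) * \<mu> * \<nu>"

lemma det_sylS: "det (sylS \<alpha> \<beta> \<gamma> lam \<mu> \<nu>) = \<beta>\<^sup>2 * sylS_det_quotient \<alpha> \<beta> \<gamma> lam \<mu> \<nu>"
  unfolding sylS_def det_sylvester_quadratics sylS_det_quotient_def by algebra

lemma is_mpoly6_sylS_det_quotient: "is_mpoly6 sylS_det_quotient"
  unfolding sylS_det_quotient_def[abs_def]
  by (intro is_mpoly6_add is_mpoly6_diff is_mpoly6_mult is_mpoly6_power is_mpoly6_variables
      is_mpoly6_const)

theorem mainTheorem1:
  fixes a1 a2 e1 e2 i1 i2 \<Omega>1 \<Omega>2 \<omega>1 \<omega>2 :: real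
  assumes "a1 > 0" "a2 > 0" "0 \<le> e1" "e1 < 1" "0 \<le> e2" "e2 < 1"
  shows "let K = Kc i1 \<Omega>1 \<omega>1 i2 \<Omega>2 \<omega>2; L = Lc i1 \<Omega>1 \<omega>1 i2 \<Omega>2 \<omega>2;
             M = Mc i1 \<Omega>1 \<omega>1 i2 \<Omega>2 \<omega>2; N = Nc i1 \<Omega>1 \<omega>1 i2 \<Omega>2 \<omega>2;
             lam = a1 * e1\<^sup>2;
             \<mu> = (\<lambda>u2. a2 * sqrt (1 - e1\<^sup>2) *
                   (sqrt (1 - e2\<^sup>2) * N * sin u2 + L * cos u2 - e2 * L));
             \<nu> = (\<lambda>u2. a2 * e2 * K - a1 * e1 - a2 * sqrt (1 - e2\<^sup>2) * M * sin u2 - a2 * K * cos u2);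
             \<alpha> = (\<lambda>u2. a1 * (sqrt (1 - e2\<^sup>2) * M * cos u2 - K * sin u2));
             \<beta> = (\<lambda>u2. a1 * sqrt (1 - e1\<^sup>2) * (sqrt (1 - e2\<^sup>2) * N * cos u2 - L * sin u2));
             \<gamma> = (\<lambda>u2. a2 * e2\<^sup>2 * sin u2 * cos u2 - a1 * e1 * sqrt (1 - e2\<^sup>2) * M * cos u2
                   + (a1 * e1 * K - a2 * e2) * sin u2)
         in \<exists>S c. finite S \<and>
              (\<forall>u2. det (sylS (\<alpha> u2) (\<beta> u2) (\<gamma> u2) lam (\<mu> u2) (\<nu> u2)) =
                    (\<beta> u2)\<^sup>2 * mpoly6_eval S c (\<alpha> u2) (\<beta> u2) (\<gamma> u2) lam (\<mu> u2) (\<nu> u2))"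
proof -
  obtain S c where "finite S" and quotient_eq: "sylS_det_quotient = mpoly6_eval S c"
    using is_mpoly6_sylS_det_quotient unfolding is_mpoly6_def by blast
  then show ?thesis
    unfolding Let_def det_sylS quotient_eq by blast
qed

end
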